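(* Let $\mathcal{X}$ be a finite nonempty set of types, $n=(n_x)_{x\in\mathcal{X}}$ nonnegative integers, and $\Phi=(\Phi_{xy})_{x,y\in\mathcal{X}}$ a real matrix, not necessarily symmetric. Define the symmetric matrix $\Phi'_{xy}=\max(\Phi_{xy},\Phi_{yx})$. Then: (i) $\mathcal{W}'_{\mathcal{P}}(n,\Phi)=\mathcal{W}_{\mathcal{P}}(n,\Phi')$; (ii) the nonexchangeable roommate problem with population $n$ and surplus $\Phi$ has a stable matching if and only if the (symmetric) roommate problem with population $n$ and surplus $\Phi'$ has a stable matching.
   Context: Nonexchangeable roommate problem: $n_x$ individuals of type $x$; an ordered pair $(x,y)$ (first partner of type $x$ in role 1, second of type $y$ in role 2; $x=y$ allowed) generates surplus $\Phi_{xy}$; singles get $0$. A matching is $\pi=(\pi_{xy})_{x,y\in\mathcal{X}}$, $\pi_{xy}\in\mathbb{N}$ the number of ordered $(x,y)$ pairs, with $\sum_{y\in\mathcal{X}}(\pi_{xy}+\pi_{yx})\le n_x$ for all $x$; its surplus is $\sum_{x,y}\pi_{xy}\Phi_{xy}$, and $\mathcal{W}'_{\mathcal{P}}(n,\Phi)$ is the maximum of this surplus over such $\pi$. A stable outcome is $(\pi,u)$ with $\pi$ feasible, $u\in\mathbb{R}^{\mathcal{X}}$, $\sum_x n_xu_x=\sum_{x,y}\pi_{xy}\Phi_{xy}$, $u_x\ge0$ and $u_x+u_y\ge\Phi_{xy}$ for all $x,y$; $\pi$ is a stable matching if such $u$ exists. Symmetric roommate problem with symmetric surplus $\Psi$: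 feasible matchings $\mathcal{P}(n)=\{\mu\in\mathbb{N}^{\mathcal{X}\times\mathcal{X}}:\ \mu_{xy}=\mu_{yx},\ 2\mu_{xx}+\sum_{y\ne x}\mu_{xy}\le n_x\ \forall x\}$, surplus $S_R(\mu;\Psi)=\sum_x\mu_{xx}\Psi_{xx}+\sum_{x\ne y}\mu_{xy}\Psi_{xy}/2$, $\mathcal{W}_{\mathcal{P}}(n,\Psi)=\max_{\mu\in\mathcal{P}(n)}S_R(\mu;\Psi)$; $\mu$ is stable if there is $u\in\mathbb{R}^{\mathcal{X}}$ with $\sum_x n_xu_x=S_R(\mu;\Psi)$, $u_x\ge0$, $u_x+u_y\ge\Psi_{xy}$ for all $x,y$. *)

theory Defs
  imports "HOL-Analysis.Analysis"
begin

definition ne_feasible :: "('x::finite \<Rightarrow> nat) \<Rightarrow> ('x \<Rightarrow> 'x \<Rightarrow> nat) \<Rightarrow> bool" where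
  "ne_feasible n \<pi> \<longleftrightarrow> (\<forall>x. (\<Sum>y\<in>UNIV. \<pi> x y + \<pi> y x) \<le> n x)"

definition ne_surplus :: "('x::finite \<Rightarrow> 'x \<Rightarrow> real) \<Rightarrow> ('x \<Rightarrow> 'x \<Rightarrow> nat) \<Rightarrow> real" where
  "ne_surplus \<Phi> \<pi> = (\<Sum>x\<in>UNIV. \<Sum>y\<in>UNIV. real (\<pi> x y) * \<Phi> x y)"

definition W_ne :: "('x::finite \<Rightarrow> nat) \<Rightarrow> ('x \<Rightarrow> 'x \<Rightarrow> real) \<Rightarrow> real" where
  "W_ne n \<Phi> = Max (ne_surplus \<Phi> ` {\<pi>. ne_feasible n \<pi>})"

definition ne_stable_outcome ::
  "('x::finite \<Rightarrow> nat) \<Rightarrow> ('x \<Rightarrow> 'x \<Rightarrow> real) \<Rightarrow> ('x \<Rightarrow> 'x \<Rightarrow> nat) \<Rightarrow> ('x \<Rightarrow> real) \<Rightarrow> bool" where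
  "ne_stable_outcome n \<Phi> \<pi> u \<longleftrightarrow> ne_feasible n \<pi>
     \<and> (\<Sum>x\<in>UNIV. real (n x) * u x) = ne_surplus \<Phi> \<pi>
     \<and> (\<forall>x. u x \<ge> 0) \<and> (\<forall>x y. u x + u y \<ge> \<Phi> x y)"

definition ne_stable_matching :: "('x::finite \<Rightarrow> nat) \<Rightarrow> ('x \<Rightarrow> 'x \<Rightarrow> real) \<Rightarrow> ('x \<Rightarrow> 'x \<Rightarrow> nat) \<Rightarrow> bool" where
  "ne_stable_matching n \<Phi> \<pi> \<longleftrightarrow> (\<exists>u. ne_stable_outcome n \<Phi> \<pi> u)"

definition P_feasible :: "('x::finite \<Rightarrow> nat) \<Rightarrow> ('x \<Rightarrow> 'x \<Rightarrow> nat) \<Rightarrow> bool" where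
  "P_feasible n \<mu> \<longleftrightarrow> (\<forall>x y. \<mu> x y = \<mu> y x)
     \<and> (\<forall>x. 2 * \<mu> x x + (\<Sum>y\<in>UNIV - {x}. \<mu> x y) \<le> n x)"

definition S_R :: "('x::finite \<Rightarrow> 'x \<Rightarrow> real) \<Rightarrow> ('x \<Rightarrow> 'x \<Rightarrow> nat) \<Rightarrow> real" where
  "S_R \<Psi> \<mu> = (\<Sum>x\<in>UNIV. real (\<mu> x x) * \<Psi> x x)
      + (\<Sum>x\<in>UNIV. \<Sum>y\<in>UNIV - {x}. real (\<mu> x y) * \<Psi> x y / 2)"

definition W_P :: "('x::finite \<Rightarrow> nat) \<Rightarrow> ('x \<Rightarrow> 'x \<Rightarrow> real) \<Rightarrow> real" where
  "W_P n \<Psi> = Max (S_R \<Psi> ` {\<mu>. P_feasible n \<mu>})"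

definition R_stable_matching :: "('x::finite \<Rightarrow> nat) \<Rightarrow> ('x \<Rightarrow> 'x \<Rightarrow> real) \<Rightarrow> ('x \<Rightarrow> 'x \<Rightarrow> nat) \<Rightarrow> bool" where
  "R_stable_matching n \<Psi> \<mu> \<longleftrightarrow> P_feasible n \<mu> \<and>
     (\<exists>u. (\<Sum>x\<in>UNIV. real (n x) * u x) = S_R \<Psi> \<mu>
        \<and> (\<forall>x. u x \<ge> 0) \<and> (\<forall>x y. u x + u y \<ge> \<Psi> x y))"

definition sym_max :: "('x \<Rightarrow> 'x \<Rightarrow> real) \<Rightarrow> ('x \<Rightarrow> 'x \<Rightarrow> real)" where
  "sym_max \<Phi> = (\<lambda>x y. max (\<Phi> x y) (\<Phi> y x))"

end

theory Submission
  imports Defs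
begin

(* Symmetrizing an ordered matching (pooling the pairs (x,y) and (y,x)) keeps it feasible and
   cannot decrease its surplus once \<Phi> is replaced by \<Phi>' = sym_max \<Phi>. Conversely a symmetric
   matching is oriented by giving every pair of distinct types the role order that attains the maximum in
   \<Phi>', which keeps feasibility and the surplus exactly. So both problems have the same value.
   For stability, note that u x + u y \<ge> \<Phi> x y for all ordered (x,y) says precisely
   u x + u y \<ge> \<Phi>' x y, and that such a u bounds every feasible surplus (weak duality); a
   dual vector certifying one problem's matching thus certifies the transported matching. *)

lemma sum_square_split_diagonal:
  fixes h :: "'x::finite \<Rightarrow> 'x \<Rightarrow> 'a::comm_monoid_add"
  shows "(\<Sum>x\<in>UNIV. \<Sum>y\<in>UNIV. h x y) = (\<Sum>x\<in>UNIV. h x x + (\<Sum>y\<in>UNIV - {x}. h x y))"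
  by (intro sum.cong refl sum.remove) auto

lemma ne_surplus_pairwise:
  "ne_surplus \<Phi> \<pi> =
     (\<Sum>x\<in>UNIV. 2 * (real (\<pi> x x) * \<Phi> x x)
        + (\<Sum>y\<in>UNIV - {x}. real (\<pi> x y) * \<Phi> x y + real (\<pi> y x) * \<Phi> y x)) / 2"
proof -
  have swap: "(\<Sum>x\<in>UNIV. \<Sum>y\<in>UNIV. real (\<pi> y x) * \<Phi> y x) = ne_surplus \<Phi> \<pi>"
    unfolding ne_surplus_def by (rule sum.swap)
  have "ne_surplus \<Phi> \<pi> =
      (\<Sum>x\<in>UNIV. \<Sum>y\<in>UNIV. real (\<pi> x y) * \<Phi> x y + real (\<pi> y x) * \<Phi> y x) / 2"
    using swap unfolding sum.distrib ne_surplus_def by simp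
  then show ?thesis
    unfolding sum_square_split_diagonal mult_2 .
qed

lemma S_R_pairwise:
  "S_R \<Psi> \<mu> =
     (\<Sum>x\<in>UNIV. 2 * (real (\<mu> x x) * \<Psi> x x) + (\<Sum>y\<in>UNIV - {x}. real (\<mu> x y) * \<Psi> x y)) / 2"
  unfolding S_R_def sum.distrib add_divide_distrib sum_divide_distrib
  by (simp add: sum_distrib_left[symmetric])

lemma ne_feasible_zero: "ne_feasible n (\<lambda>_ _. 0)"
  unfolding ne_feasible_def by simp

lemma P_feasible_zero: "P_feasible n (\<lambda>_ _. 0)"
  unfolding P_feasible_def by simp

lemma ne_feasible_entry_le:
  assumes "ne_feasible n \<pi>"
  shows "\<pi> x y \<le> n x"
proof -
  have "\<pi> x y \<le> (\<Sum>z\<in>UNIV. \<pi> x z + \<pi> z x)"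
    using member_le_sum[of y UNIV "\<lambda>z. \<pi> x z + \<pi> z x"] by simp
  also have "\<dots> \<le> n x"
    using assms unfolding ne_feasible_def by blast
  finally show ?thesis .
qed

lemma P_feasible_symmetric: "P_feasible n \<mu> \<Longrightarrow> \<mu> x y = \<mu> y x"
  unfolding P_feasible_def by auto

lemma P_feasible_entry_le:
  assumes "P_feasible n \<mu>"
  shows "\<mu> x y \<le> n x"
proof -
  have "\<mu> x y \<le> 2 * \<mu> x x + (\<Sum>z\<in>UNIV - {x}. \<mu> x z)"
    using member_le_sum[of y "UNIV - {x}" "\<mu> x"] by (cases "y = x") auto
  also have "\<dots> \<le> n x"
    using assms unfolding P_feasible_def by blast
  finally show ?thesis .
qed

lemma finite_bounded_matrices:
  "finite {\<pi> :: 'x::finite \<Rightarrow> 'x \<Rightarrow> nat. \<forall>x y. \<pi> x y \<le> N}"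
proof (rule finite_subset)
  show "{\<pi> :: 'x \<Rightarrow> 'x \<Rightarrow> nat. \<forall>x y. \<pi> x y \<le> N} \<subseteq> (\<Pi>\<^sub>E x\<in>UNIV. \<Pi>\<^sub>E y\<in>UNIV. {0..N})"
    by (auto simp: PiE_UNIV_domain)
  show "finite (\<Pi>\<^sub>E x\<in>(UNIV :: 'x set). \<Pi>\<^sub>E y\<in>(UNIV :: 'x set). {0..N})"
    by (intro finite_PiE) auto
qed

lemma finite_ne_feasible: "finite {\<pi>. ne_feasible n \<pi>}"
  by (rule finite_subset[OF _ finite_bounded_matrices[of "Max (range n)"]])
     (auto intro: le_trans[OF ne_feasible_entry_le])

lemma finite_P_feasible: "finite {\<mu>. P_feasible n \<mu>}"
  by (rule finite_subset[OF _ finite_bounded_matrices[of "Max (range n)"]])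
     (auto intro: le_trans[OF P_feasible_entry_le])

lemma W_ne_attained: "\<exists>\<pi>. ne_feasible n \<pi> \<and> W_ne n \<Phi> = ne_surplus \<Phi> \<pi>"
  using Max_in[of "ne_surplus \<Phi> ` {\<pi>. ne_feasible n \<pi>}"] finite_ne_feasible ne_feasible_zero
  unfolding W_ne_def by fastforce

lemma ne_surplus_le_W_ne: "ne_feasible n \<pi> \<Longrightarrow> ne_surplus \<Phi> \<pi> \<le> W_ne n \<Phi>"
  unfolding W_ne_def using finite_ne_feasible by (intro Max_ge) auto

lemma W_P_attained: "\<exists>\<mu>. P_feasible n \<mu> \<and> W_P n \<Psi> = S_R \<Psi> \<mu>"
  using Max_in[of "S_R \<Psi> ` {\<mu>. P_feasible n \<mu>}"] finite_P_feasible P_feasible_zero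
  unfolding W_P_def by fastforce

lemma S_R_le_W_P: "P_feasible n \<mu> \<Longrightarrow> S_R \<Psi> \<mu> \<le> W_P n \<Psi>"
  unfolding W_P_def using finite_P_feasible by (intro Max_ge) auto

definition symmetrize :: "('x \<Rightarrow> 'x \<Rightarrow> nat) \<Rightarrow> 'x \<Rightarrow> 'x \<Rightarrow> nat" where
  "symmetrize \<pi> = (\<lambda>x y. if x = y then \<pi> x x else \<pi> x y + \<pi> y x)"

lemma P_feasible_symmetrize:
  assumes "ne_feasible n \<pi>"
  shows "P_feasible n (symmetrize \<pi>)"
  unfolding P_feasible_def
proof (intro conjI allI)
  fix x y
  show "symmetrize \<pi> x y = symmetrize \<pi> y x"
    unfolding symmetrize_def by auto
next
  fix x
  have "(\<Sum>y\<in>UNIV - {x}. symmetrize \<pi> x y) = (\<Sum>y\<in>UNIV - {x}. \<pi> x y + \<pi> y x)"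
    by (rule sum.cong) (auto simp: symmetrize_def)
  then have "2 * symmetrize \<pi> x x + (\<Sum>y\<in>UNIV - {x}. symmetrize \<pi> x y)
      = (\<Sum>y\<in>UNIV. \<pi> x y + \<pi> y x)"
    by (simp add: symmetrize_def sum.remove[of UNIV x])
  also have "\<dots> \<le> n x"
    using assms unfolding ne_feasible_def by blast
  finally show "2 * symmetrize \<pi> x x + (\<Sum>y\<in>UNIV - {x}. symmetrize \<pi> x y) \<le> n x" .
qed

lemma ne_surplus_le_S_R_symmetrize:
  "ne_surplus \<Phi> \<pi> \<le> S_R (sym_max \<Phi>) (symmetrize \<pi>)"
proof -
  have pair: "real (\<pi> x y) * \<Phi> x y + real (\<pi> y x) * \<Phi> y x
      \<le> real (symmetrize \<pi> x y) * sym_max \<Phi> x y" if "y \<noteq> x" for x y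
  proof -
    have "real (\<pi> x y) * \<Phi> x y \<le> real (\<pi> x y) * sym_max \<Phi> x y"
      and "real (\<pi> y x) * \<Phi> y x \<le> real (\<pi> y x) * sym_max \<Phi> x y"
      by (intro mult_left_mono; simp add: sym_max_def)+
    then show ?thesis
      using that by (simp add: symmetrize_def distrib_right)
  qed
  have diag: "real (\<pi> x x) * \<Phi> x x = real (symmetrize \<pi> x x) * sym_max \<Phi> x x" for x
    by (simp add: symmetrize_def sym_max_def)
  show ?thesis
    unfolding ne_surplus_pairwise S_R_pairwise diag
    by (intro divide_right_mono sum_mono add_left_mono) (auto intro: pair)
qed

definition oriented :: "('x::finite \<Rightarrow> 'x \<Rightarrow> real) \<Rightarrow> 'x \<Rightarrow> 'x \<Rightarrow> bool" where
  "oriented \<Phi> x y \<longleftrightarrow> \<Phi> x y > \<Phi> y x \<or> (\<Phi> x y = \<Phi> y x \<and> to_nat x < to_nat y)"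

definition orient :: "('x::finite \<Rightarrow> 'x \<Rightarrow> real) \<Rightarrow> ('x \<Rightarrow> 'x \<Rightarrow> nat) \<Rightarrow> 'x \<Rightarrow> 'x \<Rightarrow> nat" where
  "orient \<Phi> \<mu> = (\<lambda>x y. if x = y \<or> oriented \<Phi> x y then \<mu> x y else 0)"

lemma oriented_asym_iff:
  assumes "x \<noteq> y"
  shows "oriented \<Phi> x y \<longleftrightarrow> \<not> oriented \<Phi> y x"
proof -
  have "to_nat x < to_nat y \<or> to_nat y < to_nat x"
    using assms by (metis linorder_neqE_nat to_nat_split)
  then show ?thesis
    unfolding oriented_def by auto
qed

lemma orient_pair:
  assumes "\<And>a b. \<mu> a b = \<mu> b a" and "x \<noteq> y"
  shows "orient \<Phi> \<mu> x y + orient \<Phi> \<mu> y x = \<mu> x y"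
    and "real (orient \<Phi> \<mu> x y) * \<Phi> x y + real (orient \<Phi> \<mu> y x) * \<Phi> y x
         = real (\<mu> x y) * sym_max \<Phi> x y"
  using assms oriented_asym_iff[OF assms(2), of \<Phi>]
  unfolding orient_def sym_max_def oriented_def by (auto simp: max_def)

lemma ne_feasible_orient:
  assumes "P_feasible n \<mu>"
  shows "ne_feasible n (orient \<Phi> \<mu>)"
  unfolding ne_feasible_def
proof
  fix x
  have "(\<Sum>y\<in>UNIV - {x}. orient \<Phi> \<mu> x y + orient \<Phi> \<mu> y x) = (\<Sum>y\<in>UNIV - {x}. \<mu> x y)"
  proof (rule sum.cong)
    show "orient \<Phi> \<mu> x y + orient \<Phi> \<mu> y x = \<mu> x y" if "y \<in> UNIV - {x}" for y
      using orient_pair(1)[where \<mu> = \<mu>, OF P_feasible_symmetric[OF assms]] that by simp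
  qed simp
  then have "(\<Sum>y\<in>UNIV. orient \<Phi> \<mu> x y + orient \<Phi> \<mu> y x)
      = 2 * \<mu> x x + (\<Sum>y\<in>UNIV - {x}. \<mu> x y)"
    by (simp add: orient_def sum.remove[of UNIV x])
  also have "\<dots> \<le> n x"
    using assms unfolding P_feasible_def by blast
  finally show "(\<Sum>y\<in>UNIV. orient \<Phi> \<mu> x y + orient \<Phi> \<mu> y x) \<le> n x" .
qed

lemma ne_surplus_orient:
  assumes "P_feasible n \<mu>"
  shows "ne_surplus \<Phi> (orient \<Phi> \<mu>) = S_R (sym_max \<Phi>) \<mu>"
proof -
  have pairs: "(\<Sum>y\<in>UNIV - {x}. real (orient \<Phi> \<mu> x y) * \<Phi> x y + real (orient \<Phi> \<mu> y x) * \<Phi> y x)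
      = (\<Sum>y\<in>UNIV - {x}. real (\<mu> x y) * sym_max \<Phi> x y)" for x
  proof (rule sum.cong)
    show "real (orient \<Phi> \<mu> x y) * \<Phi> x y + real (orient \<Phi> \<mu> y x) * \<Phi> y x
        = real (\<mu> x y) * sym_max \<Phi> x y" if "y \<in> UNIV - {x}" for y
      using orient_pair(2)[where \<mu> = \<mu>, OF P_feasible_symmetric[OF assms]] that by simp
  qed simp
  have diag: "real (orient \<Phi> \<mu> x x) * \<Phi> x x = real (\<mu> x x) * sym_max \<Phi> x x" for x
    by (simp add: orient_def sym_max_def)
  show ?thesis
    unfolding ne_surplus_pairwise S_R_pairwise pairs diag ..
qed

lemma ne_surplus_le_dual:
  assumes "ne_feasible n \<pi>" and "\<forall>x. u x \<ge> 0" and "\<forall>x y. u x + u y \<ge> \<Phi> x y"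
  shows "ne_surplus \<Phi> \<pi> \<le> (\<Sum>x\<in>UNIV. real (n x) * u x)"
proof -
  have "ne_surplus \<Phi> \<pi> \<le> (\<Sum>x\<in>UNIV. \<Sum>y\<in>UNIV. real (\<pi> x y) * (u x + u y))"
    unfolding ne_surplus_def using assms(3) by (intro sum_mono mult_left_mono) auto
  also have "\<dots> = (\<Sum>x\<in>UNIV. \<Sum>y\<in>UNIV. real (\<pi> x y) * u x)
      + (\<Sum>x\<in>UNIV. \<Sum>y\<in>UNIV. real (\<pi> y x) * u x)"
    by (simp add: distrib_left sum.distrib sum.swap[of "\<lambda>x y. real (\<pi> x y) * u y"])
  also have "\<dots> = (\<Sum>x\<in>UNIV. real (\<Sum>y\<in>UNIV. \<pi> x y + \<pi> y x) * u x)"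
    by (simp add: sum.distrib[symmetric] sum_distrib_right distrib_right)
  also have "\<dots> \<le> (\<Sum>x\<in>UNIV. real (n x) * u x)"
    using assms(1,2) unfolding ne_feasible_def
    by (intro sum_mono mult_right_mono) (auto simp del: of_nat_sum)
  finally show ?thesis .
qed

lemma dual_feasible_sym_max_iff:
  "(\<forall>x y. u x + u y \<ge> sym_max \<Phi> x y) \<longleftrightarrow> (\<forall>x y. u x + u y \<ge> \<Phi> x y)"
  unfolding sym_max_def by (metis add.commute max.bounded_iff)

lemma W_ne_eq_W_P_sym_max: "W_ne n \<Phi> = W_P n (sym_max \<Phi>)"
proof (rule antisym)
  obtain \<pi> where \<pi>: "ne_feasible n \<pi>" "W_ne n \<Phi> = ne_surplus \<Phi> \<pi>"
    using W_ne_attained by blast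
  have "ne_surplus \<Phi> \<pi> \<le> S_R (sym_max \<Phi>) (symmetrize \<pi>)"
    by (rule ne_surplus_le_S_R_symmetrize)
  also have "\<dots> \<le> W_P n (sym_max \<Phi>)"
    by (rule S_R_le_W_P[OF P_feasible_symmetrize[OF \<pi>(1)]])
  finally show "W_ne n \<Phi> \<le> W_P n (sym_max \<Phi>)"
    using \<pi>(2) by simp
next
  obtain \<mu> where \<mu>: "P_feasible n \<mu>" "W_P n (sym_max \<Phi>) = S_R (sym_max \<Phi>) \<mu>"
    using W_P_attained by blast
  have "S_R (sym_max \<Phi>) \<mu> = ne_surplus \<Phi> (orient \<Phi> \<mu>)"
    by (rule ne_surplus_orient[OF \<mu>(1), symmetric])
  also have "\<dots> \<le> W_ne n \<Phi>"
    by (rule ne_surplus_le_W_ne[OF ne_feasible_orient[OF \<mu>(1)]])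
  finally show "W_P n (sym_max \<Phi>) \<le> W_ne n \<Phi>"
    using \<mu>(2) by simp
qed

lemma ne_stable_imp_R_stable:
  assumes "ne_stable_matching n \<Phi> \<pi>"
  shows "R_stable_matching n (sym_max \<Phi>) (symmetrize \<pi>)"
proof -
  obtain u where feas: "ne_feasible n \<pi>" and val: "(\<Sum>x\<in>UNIV. real (n x) * u x) = ne_surplus \<Phi> \<pi>"
    and u: "\<forall>x. u x \<ge> 0" "\<forall>x y. u x + u y \<ge> \<Phi> x y"
    using assms unfolding ne_stable_matching_def ne_stable_outcome_def by blast
  have sym_feas: "P_feasible n (symmetrize \<pi>)"
    by (rule P_feasible_symmetrize[OF feas])
  have "S_R (sym_max \<Phi>) (symmetrize \<pi>) = ne_surplus \<Phi> (orient \<Phi> (symmetrize \<pi>))"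
    by (rule ne_surplus_orient[OF sym_feas, symmetric])
  also have "\<dots> \<le> (\<Sum>x\<in>UNIV. real (n x) * u x)"
    by (rule ne_surplus_le_dual[OF ne_feasible_orient[OF sym_feas] u])
  finally have "(\<Sum>x\<in>UNIV. real (n x) * u x) = S_R (sym_max \<Phi>) (symmetrize \<pi>)"
    using ne_surplus_le_S_R_symmetrize[of \<Phi> \<pi>] val by linarith
  then show ?thesis
    unfolding R_stable_matching_def dual_feasible_sym_max_iff using sym_feas u by blast
qed

lemma R_stable_imp_ne_stable:
  assumes "R_stable_matching n (sym_max \<Phi>) \<mu>"
  shows "ne_stable_matching n \<Phi> (orient \<Phi> \<mu>)"
  using assms ne_feasible_orient ne_surplus_orient
  unfolding R_stable_matching_def dual_feasible_sym_max_iff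
    ne_stable_matching_def ne_stable_outcome_def
  by metis

theorem theorem4:
  fixes n :: "'x::finite \<Rightarrow> nat" and \<Phi> :: "'x \<Rightarrow> 'x \<Rightarrow> real"
  shows "W_ne n \<Phi> = W_P n (sym_max \<Phi>) \<and>
         ((\<exists>\<pi>. ne_stable_matching n \<Phi> \<pi>) \<longleftrightarrow> (\<exists>\<mu>. R_stable_matching n (sym_max \<Phi>) \<mu>))"
  using W_ne_eq_W_P_sym_max ne_stable_imp_R_stable R_stable_imp_ne_stable by blast

end
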